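(* Let $\mathcal{C}$ be a nonempty chordal $d$-uniform clutter on $[n]$ with multiset $\{N_1,\ldots,N_r\}$, let $N=\max\{N_1,\ldots,N_r\}$, and let $\Delta=\Delta(\mathcal{C})$ be its clique complex, with $\mathbf{h}$-vector $(h_i)$. Then \[ \sum_{i\ge0}h_it^i=\sum_{i=0}^{d-1}\binom{n}{i}t^i(1-t)^{N+d-i-1}+t^{d-1}\sum_{i=1}^r\Big((1-t)^{N-N_i}-(1-t)^{N}\Big). \]
   Context: A $d$-uniform clutter $\mathcal{C}$ on $[n]$ is a set of $d$-subsets of $[n]$. A $(d-1)$-subset $e$ is a submaximal circuit if $e\subset F$ for some $F\in\mathcal{C}$; $V\subseteq[n]$ is a clique if all $d$-subsets of $V$ lie in $\mathcal{C}$ (sets with fewer than $d$ elements are cliques); the clique complex $\Delta(\mathcal{C})$ consists of all cliques. $\mathrm{N}_{\mathcal{C}}(e)=\{c: e\cup\{c\}\in\mathcal{C}\}$, $\mathrm{N}_{\mathcal{C}}[e]=e\cup\mathrm{N}_{\mathcal{C}}(e)$; $e$ is simplicial if it is a submaximal circuit and $\mathrm{N}_{\mathcal{C}}[e]$ is a clique. $\mathcal{C}\setminus e=\{F\in\mathcal{C}:e\not\subset F\}$, and $\mathcal{C}_{e_1\cdots e_i}$ is successive deletion. A simplicial order is a sequence $e_1,\ldots,e_r$ with $e_i$ simplicial in $\mathcal{C}_{e_1\cdots e_{i-1}}$ (in $\mathcal{C}$ for $i=1$) and $\mathcal{C}_{e_1\cdots e_r}=\emptyset$; $\mathcal{C}$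 is chordal if one exists. The multiset of $\mathcal{C}$ is $\{N_1,\ldots,N_r\}$ with $N_i=|\mathrm{N}_{\mathcal{C}_{e_1\cdots e_{i-1}}}(e_i)|$ for a simplicial order (it does not depend on the order chosen). For a simplicial complex $\Delta$ on $[n]$ and a field $K$, the Stanley–Reisner ring $K[\Delta]=K[x_1,\ldots,x_n]/I_\Delta$, $I_\Delta=(\prod_{j\in F}x_j: F\notin\Delta)$, has Hilbert series $Q(t)/(1-t)^{\delta}$ with $\delta=\dim K[\Delta]$ and $Q(t)=\sum_{i=0}^{\delta}h_it^i$; $(h_0,\ldots,h_\delta)$ is the $\mathbf{h}$-vector of $\Delta$. *)

theory Defs
  imports "HOL-Computational_Algebra.Polynomial_FPS"
begin

definition uniform_clutter :: "nat \<Rightarrow> nat \<Rightarrow> nat set set \<Rightarrow> bool" where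
  "uniform_clutter n d C \<longleftrightarrow> (\<forall>F\<in>C. F \<subseteq> {1..n} \<and> card F = d)"

definition submax_circuit :: "nat \<Rightarrow> nat set set \<Rightarrow> nat set \<Rightarrow> bool" where
  "submax_circuit d C e \<longleftrightarrow> card e = d - 1 \<and> (\<exists>F\<in>C. e \<subseteq> F)"

text \<open>Cliques (subsets of [n] all of whose d-subsets lie in C; sets with fewer than d
  elements are vacuously cliques).\<close>
definition is_clique :: "nat \<Rightarrow> nat \<Rightarrow> nat set set \<Rightarrow> nat set \<Rightarrow> bool" where
  "is_clique n d C V \<longleftrightarrow> V \<subseteq> {1..n} \<and> (\<forall>S. S \<subseteq> V \<and> card S = d \<longrightarrow> S \<in> C)"

definition clique_complex :: "nat \<Rightarrow> nat \<Rightarrow> nat set set \<Rightarrow> nat set set" where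
  "clique_complex n d C = {V. is_clique n d C V}"

definition nbhd :: "nat set set \<Rightarrow> nat set \<Rightarrow> nat set" where
  "nbhd C e = {c. insert c e \<in> C}"

definition closed_nbhd :: "nat set set \<Rightarrow> nat set \<Rightarrow> nat set" where
  "closed_nbhd C e = e \<union> nbhd C e"

definition simplicial :: "nat \<Rightarrow> nat \<Rightarrow> nat set set \<Rightarrow> nat set \<Rightarrow> bool" where
  "simplicial n d C e \<longleftrightarrow> submax_circuit d C e \<and> is_clique n d C (closed_nbhd C e)"

definition delete :: "nat set set \<Rightarrow> nat set \<Rightarrow> nat set set" where
  "delete C e = {F\<in>C. \<not> e \<subseteq> F}"

definition deletes :: "nat set set \<Rightarrow> nat set list \<Rightarrow> nat set set" where
  "deletes C es = foldl delete C es"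

definition simplicial_order :: "nat \<Rightarrow> nat \<Rightarrow> nat set set \<Rightarrow> nat set list \<Rightarrow> bool" where
  "simplicial_order n d C es \<longleftrightarrow>
     (\<forall>i<length es. simplicial n d (deletes C (take i es)) (es ! i)) \<and> deletes C es = {}"

definition chordal :: "nat \<Rightarrow> nat \<Rightarrow> nat set set \<Rightarrow> bool" where
  "chordal n d C \<longleftrightarrow> (\<exists>es. simplicial_order n d C es)"

text \<open>The numbers N_i = |N_{C_{e_1...e_{i-1}}}(e_i)| of a simplicial order (as a list,
  indexed from 0).\<close>
definition order_multiset :: "nat set set \<Rightarrow> nat set list \<Rightarrow> nat list" where
  "order_multiset C es = map (\<lambda>i. card (nbhd (deletes C (take i es)) (es ! i))) [0..<length es]"

text \<open>Stanley--Reisner ring K[Delta] of a simplicial complex Delta on [n]: its degree-k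
  component has as K-basis the monomials of degree k whose support is a face of Delta.\<close>
definition sr_hilbert_fun :: "nat \<Rightarrow> nat set set \<Rightarrow> nat \<Rightarrow> nat" where
  "sr_hilbert_fun n \<Delta> k = card {\<alpha> :: nat \<Rightarrow> nat. (\<forall>j. j \<notin> {1..n} \<longrightarrow> \<alpha> j = 0)
        \<and> (\<Sum>j\<in>{1..n}. \<alpha> j) = k \<and> {j\<in>{1..n}. \<alpha> j \<noteq> 0} \<in> \<Delta>}"

definition sr_hilbert_series :: "nat \<Rightarrow> nat set set \<Rightarrow> int fps" where
  "sr_hilbert_series n \<Delta> = Abs_fps (\<lambda>k. int (sr_hilbert_fun n \<Delta> k))"

text \<open>Krull dimension of K[Delta] = maximal cardinality of a face.\<close>
definition sr_dim :: "nat set set \<Rightarrow> nat" where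
  "sr_dim \<Delta> = Max (card ` \<Delta>)"

text \<open>The h-polynomial Q(t) = sum h_i t^i, defined by HS(t) = Q(t)/(1-t)^delta, i.e.
  Q(t) = HS(t) (1-t)^delta as formal power series; h_i are its coefficients.\<close>
definition h_series :: "nat \<Rightarrow> nat set set \<Rightarrow> int fps" where
  "h_series n \<Delta> = sr_hilbert_series n \<Delta> * (1 - fps_X) ^ sr_dim \<Delta>"

definition h_vector :: "nat \<Rightarrow> nat set set \<Rightarrow> nat \<Rightarrow> int" where
  "h_vector n \<Delta> i = fps_nth (h_series n \<Delta>) i"

end

theory Submission
  imports Defs
begin

text \<open>Grouping the monomials of \<open>K[\<Delta>]\<close> by their support gives
  \<open>HS(t) = \<Sum>\<^sub>F\<^sub>\<in>\<^sub>\<Delta> (t/(1-t))\<^bsup>|F|\<^esup>\<close>, so the h-polynomial is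
  \<open>\<Sum>\<^sub>F\<^sub>\<in>\<^sub>\<Delta> t\<^bsup>|F|\<^esup> (1-t)\<^bsup>\<delta>-|F|\<^esup>\<close> and only the face numbers of \<open>\<Delta>(C)\<close> matter.
  Deleting a simplicial circuit \<open>e\<close> removes from the clique complex exactly the faces
  \<open>e \<union> A\<close> with \<open>\<emptyset> \<noteq> A \<subseteq> N(e)\<close>; by the binomial theorem these contribute
  \<open>t\<^bsup>d-1\<^esup>((1-t)\<^bsup>N-N\<^sub>i\<^esup> - (1-t)\<^bsup>N\<^esup>)\<close>. Once \<open>C\<close> is exhausted only the sets of size
  below \<open>d\<close> remain, giving the binomial terms, and the largest face seen along the way
  has \<open>d - 1 + N\<close> elements, so \<open>\<delta> = N + d - 1\<close>.\<close>

unbundle fps_syntax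

section \<open>Stanley--Reisner Hilbert series as a sum over faces\<close>

definition exact_support_monomials :: "nat set \<Rightarrow> nat \<Rightarrow> (nat \<Rightarrow> nat) set" where
  "exact_support_monomials F k =
     {\<alpha>. (\<forall>j. j \<notin> F \<longrightarrow> \<alpha> j = 0) \<and> (\<forall>j\<in>F. \<alpha> j > 0) \<and> (\<Sum>j\<in>F. \<alpha> j) = k}"

definition exact_support_series :: "nat set \<Rightarrow> int fps" where
  "exact_support_series F = Abs_fps (\<lambda>k. int (card (exact_support_monomials F k)))"

lemma finite_exact_support_monomials:
  assumes "finite F"
  shows "finite (exact_support_monomials F k)"
proof -
  have "exact_support_monomials F k \<subseteq> {\<alpha>. \<forall>j. (j \<in> F \<longrightarrow> \<alpha> j \<in> {0..k}) \<and> (j \<notin> F \<longrightarrow> \<alpha> j = 0)}"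
  proof safe
    fix \<alpha> j assume \<alpha>: "\<alpha> \<in> exact_support_monomials F k" and "j \<in> F"
    then have "\<alpha> j \<le> (\<Sum>j\<in>F. \<alpha> j)" using assms by (intro member_le_sum) auto
    with \<alpha> show "\<alpha> j \<in> {0..k}" by (simp add: exact_support_monomials_def)
  qed (auto simp: exact_support_monomials_def)
  then show ?thesis
    by (rule finite_subset) (intro finite_set_of_finite_funs assms, simp)
qed

lemma exact_support_monomials_insert:
  assumes "finite F" "a \<notin> F"
  shows "exact_support_monomials (insert a F) k =
           (\<Union>i\<in>{1..k}. (\<lambda>\<beta>. \<beta>(a := i)) ` exact_support_monomials F (k - i))"
proof (intro equalityI subsetI)
  fix \<alpha> assume \<alpha>: "\<alpha> \<in> exact_support_monomials (insert a F) k"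
  have "(\<Sum>j\<in>F. (\<alpha>(a := 0)) j) = (\<Sum>j\<in>F. \<alpha> j)" using assms by (intro sum.cong) auto
  with \<alpha> assms have "\<alpha>(a := 0) \<in> exact_support_monomials F (k - \<alpha> a)" "\<alpha> a \<in> {1..k}"
    by (auto simp: exact_support_monomials_def)
  moreover have "\<alpha> = (\<alpha>(a := 0))(a := \<alpha> a)" by simp
  ultimately show "\<alpha> \<in> (\<Union>i\<in>{1..k}. (\<lambda>\<beta>. \<beta>(a := i)) ` exact_support_monomials F (k - i))"
    by blast
next
  fix \<alpha> assume "\<alpha> \<in> (\<Union>i\<in>{1..k}. (\<lambda>\<beta>. \<beta>(a := i)) ` exact_support_monomials F (k - i))"
  then obtain i \<beta> where i: "i \<in> {1..k}" and \<beta>: "\<beta> \<in> exact_support_monomials F (k - i)"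
    and "\<alpha> = \<beta>(a := i)" by blast
  moreover have "(\<Sum>j\<in>F. (\<beta>(a := i)) j) = (\<Sum>j\<in>F. \<beta> j)" using assms by (intro sum.cong) auto
  ultimately show "\<alpha> \<in> exact_support_monomials (insert a F) k"
    using assms by (auto simp: exact_support_monomials_def)
qed

lemma card_exact_support_monomials_insert:
  assumes "finite F" "a \<notin> F"
  shows "card (exact_support_monomials (insert a F) k) =
           (\<Sum>i\<in>{1..k}. card (exact_support_monomials F (k - i)))"
proof -
  let ?M = "exact_support_monomials F" and ?upd = "\<lambda>i \<beta>. \<beta>(a := i)"
  have inj: "inj_on (?upd i) (?M j)" for i j
  proof (rule inj_onI)
    fix \<beta> \<gamma> assume "\<beta> \<in> ?M j" "\<gamma> \<in> ?M j" "\<beta>(a := i) = \<gamma>(a := i)"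
    moreover from this have "\<beta> a = \<gamma> a"
      using assms(2) by (simp add: exact_support_monomials_def)
    ultimately show "\<beta> = \<gamma>" by (metis fun_upd_triv fun_upd_upd)
  qed
  have "card (exact_support_monomials (insert a F) k) = (\<Sum>i\<in>{1..k}. card (?upd i ` ?M (k - i)))"
    unfolding exact_support_monomials_insert[OF assms]
    by (rule card_UN_disjoint) (auto simp: finite_exact_support_monomials[OF assms(1)] dest: fun_cong[of _ _ a])
  also have "\<dots> = (\<Sum>i\<in>{1..k}. card (?M (k - i)))"
    using inj by (simp add: card_image)
  finally show ?thesis .
qed

definition positive_powers :: "int fps" where
  "positive_powers = Abs_fps (\<lambda>i. if i = 0 then 0 else 1)"

lemma positive_powers_times_one_minus_X: "positive_powers * (1 - fps_X) = fps_X"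
proof (rule fps_ext)
  fix k show "(positive_powers * (1 - fps_X)) $ k = fps_X $ k"
    by (cases k) (simp_all add: positive_powers_def algebra_simps)
qed

lemma exact_support_series_insert:
  assumes "finite F" "a \<notin> F"
  shows "exact_support_series (insert a F) = positive_powers * exact_support_series F"
proof (rule fps_ext)
  fix k
  have "(positive_powers * exact_support_series F) $ k =
          (\<Sum>i=0..k. positive_powers $ i * exact_support_series F $ (k - i))"
    by (rule fps_mult_nth)
  also have "\<dots> = (\<Sum>i\<in>{1..k}. positive_powers $ i * exact_support_series F $ (k - i))"
    by (rule sum.mono_neutral_right) (auto simp: positive_powers_def)
  also have "\<dots> = (\<Sum>i\<in>{1..k}. int (card (exact_support_monomials F (k - i))))"
    by (intro sum.cong) (auto simp: positive_powers_def exact_support_series_def)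
  finally show "exact_support_series (insert a F) $ k = (positive_powers * exact_support_series F) $ k"
    by (simp add: exact_support_series_def card_exact_support_monomials_insert[OF assms])
qed

lemma exact_support_series_times_power:
  "finite F \<Longrightarrow> exact_support_series F * (1 - fps_X) ^ card F = fps_X ^ card F"
proof (induction F rule: finite_induct)
  case empty
  have "exact_support_monomials {} k = (if k = 0 then {\<lambda>_. 0} else {})" for k
    by (auto simp: exact_support_monomials_def)
  then have "exact_support_series {} = 1"
    by (intro fps_ext) (simp add: exact_support_series_def)
  then show ?case by simp
next
  case (insert a F)
  have "exact_support_series (insert a F) * (1 - fps_X) ^ card (insert a F)
      = (positive_powers * (1 - fps_X)) * (exact_support_series F * (1 - fps_X) ^ card F)"
    using insert by (simp add: exact_support_series_insert algebra_simps)
  also have "\<dots> = fps_X ^ card (insert a F)"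
    using insert by (simp add: positive_powers_times_one_minus_X)
  finally show ?case .
qed

lemma sr_hilbert_fun_eq_sum_faces:
  assumes "\<Delta> \<subseteq> Pow {1..n}"
  shows "sr_hilbert_fun n \<Delta> k = (\<Sum>F\<in>\<Delta>. card (exact_support_monomials F k))"
proof -
  have fin: "finite \<Delta>" using assms by (rule finite_subset) simp
  have "{\<alpha>. (\<forall>j. j \<notin> {1..n} \<longrightarrow> \<alpha> j = 0) \<and> (\<Sum>j\<in>{1..n}. \<alpha> j) = k
            \<and> {j\<in>{1..n}. \<alpha> j \<noteq> 0} \<in> \<Delta>} = (\<Union>F\<in>\<Delta>. exact_support_monomials F k)"
    (is "?L = ?R")
  proof (intro equalityI subsetI)
    fix \<alpha> assume \<alpha>: "\<alpha> \<in> ?L"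
    define F where "F = {j\<in>{1..n}. \<alpha> j \<noteq> 0}"
    have "(\<Sum>j\<in>F. \<alpha> j) = (\<Sum>j\<in>{1..n}. \<alpha> j)"
      by (rule sum.mono_neutral_left) (auto simp: F_def)
    with \<alpha> have "\<alpha> \<in> exact_support_monomials F k" "F \<in> \<Delta>"
      by (auto simp: exact_support_monomials_def F_def)
    then show "\<alpha> \<in> ?R" by blast
  next
    fix \<alpha> assume "\<alpha> \<in> ?R"
    then obtain F where F: "F \<in> \<Delta>" "\<alpha> \<in> exact_support_monomials F k" by blast
    with assms have "F \<subseteq> {1..n}" by auto
    moreover have "(\<Sum>j\<in>F. \<alpha> j) = (\<Sum>j\<in>{1..n}. \<alpha> j)"
      using F \<open>F \<subseteq> {1..n}\<close>
      by (intro sum.mono_neutral_left) (auto simp: exact_support_monomials_def)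
    moreover have "{j\<in>{1..n}. \<alpha> j \<noteq> 0} = F"
      using F \<open>F \<subseteq> {1..n}\<close> by (auto simp: exact_support_monomials_def)
    ultimately show "\<alpha> \<in> ?L" using F by (auto simp: exact_support_monomials_def)
  qed
  moreover have "card ?R = (\<Sum>F\<in>\<Delta>. card (exact_support_monomials F k))"
  proof (rule card_UN_disjoint[OF fin])
    show "\<forall>F\<in>\<Delta>. finite (exact_support_monomials F k)"
      using assms by (auto intro!: finite_exact_support_monomials intro: finite_subset)
    have "exact_support_monomials F k \<subseteq> {\<alpha>. {j. \<alpha> j \<noteq> 0} = F}" for F
      by (auto simp: exact_support_monomials_def)
    then show "\<forall>F\<in>\<Delta>. \<forall>G\<in>\<Delta>. F \<noteq> G \<longrightarrow> exact_support_monomials F k \<inter> exact_support_monomials G k = {}"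
      by blast
  qed
  ultimately show ?thesis by (simp add: sr_hilbert_fun_def)
qed

lemma h_series_eq_sum_faces:
  assumes "\<Delta> \<subseteq> Pow {1..n}"
  shows "h_series n \<Delta> = (\<Sum>F\<in>\<Delta>. fps_X ^ card F * (1 - fps_X) ^ (sr_dim \<Delta> - card F))"
proof -
  have "sr_hilbert_series n \<Delta> = (\<Sum>F\<in>\<Delta>. exact_support_series F)"
    by (rule fps_ext)
      (simp add: sr_hilbert_series_def fps_sum_nth exact_support_series_def
        sr_hilbert_fun_eq_sum_faces[OF assms])
  then have "h_series n \<Delta> = (\<Sum>F\<in>\<Delta>. exact_support_series F * (1 - fps_X) ^ sr_dim \<Delta>)"
    by (simp add: h_series_def sum_distrib_right)
  also have "\<dots> = (\<Sum>F\<in>\<Delta>. fps_X ^ card F * (1 - fps_X) ^ (sr_dim \<Delta> - card F))"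
  proof (rule sum.cong[OF refl])
    fix F assume F: "F \<in> \<Delta>"
    have "finite \<Delta>" using assms by (rule finite_subset) simp
    with F have "card F \<le> sr_dim \<Delta>" by (simp add: sr_dim_def)
    then have "exact_support_series F * (1 - fps_X) ^ sr_dim \<Delta> =
        (exact_support_series F * (1 - fps_X) ^ card F) * (1 - fps_X) ^ (sr_dim \<Delta> - card F)"
      by (simp add: mult.assoc power_add[symmetric])
    also have "\<dots> = fps_X ^ card F * (1 - fps_X) ^ (sr_dim \<Delta> - card F)"
      using F assms by (subst exact_support_series_times_power) (auto intro: finite_subset)
    finally show "exact_support_series F * (1 - fps_X) ^ sr_dim \<Delta> =
        fps_X ^ card F * (1 - fps_X) ^ (sr_dim \<Delta> - card F)" .
  qed
  finally show ?thesis .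
qed

section \<open>Counting faces of a chordal clutter\<close>

lemma sum_subsets_by_card:
  fixes g :: "nat \<Rightarrow> 'a::comm_semiring_1"
  assumes "finite S" "finite I"
  shows "(\<Sum>A\<in>{A. A \<subseteq> S \<and> card A \<in> I}. g (card A)) = (\<Sum>i\<in>I. of_nat (card S choose i) * g i)"
proof -
  have "{A. A \<subseteq> S \<and> card A \<in> I} = (\<Union>i\<in>I. {A. A \<subseteq> S \<and> card A = i})" by auto
  then have "(\<Sum>A\<in>{A. A \<subseteq> S \<and> card A \<in> I}. g (card A))
      = (\<Sum>i\<in>I. \<Sum>A\<in>{A. A \<subseteq> S \<and> card A = i}. g (card A))"
    using assms by (simp, subst sum.UNION_disjoint) (auto intro: finite_subset[of _ "Pow S"])
  also have "\<dots> = (\<Sum>i\<in>I. of_nat (card S choose i) * g i)"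
    using assms(1) by (simp add: n_subsets)
  finally show ?thesis .
qed

lemma simplicial_order_Nil: "simplicial_order n d C [] \<longleftrightarrow> C = {}"
  by (simp add: simplicial_order_def deletes_def)

lemma simplicial_order_Cons:
  "simplicial_order n d C (e # es) \<longleftrightarrow> simplicial n d C e \<and> simplicial_order n d (delete C e) es"
proof -
  have deletes_Cons: "deletes C (e # es') = deletes (delete C e) es'" for es'
    by (simp add: deletes_def)
  have "(\<forall>i<length (e # es). simplicial n d (deletes C (take i (e # es))) ((e # es) ! i))
     \<longleftrightarrow> simplicial n d C e \<and> (\<forall>i<length es. simplicial n d (deletes (delete C e) (take i es)) (es ! i))"
    by (simp add: All_less_Suc2 deletes_Cons) (simp add: deletes_def)
  then show ?thesis by (simp add: simplicial_order_def deletes_Cons)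
qed

lemma order_multiset_Nil: "order_multiset C [] = []"
  by (simp add: order_multiset_def)

lemma order_multiset_Cons:
  "order_multiset C (e # es) = card (nbhd C e) # order_multiset (delete C e) es"
proof -
  have "[0..<length (e # es)] = 0 # map Suc [0..<length es]"
    by (simp add: upt_conv_Cons map_Suc_upt del: upt_Suc)
  then show ?thesis by (simp add: order_multiset_def deletes_def)
qed

lemma uniform_clutter_delete: "uniform_clutter n d C \<Longrightarrow> uniform_clutter n d (delete C e)"
  by (auto simp: uniform_clutter_def delete_def)

lemma clique_complex_subset_Pow: "clique_complex n d C \<subseteq> Pow {1..n}"
  by (auto simp: clique_complex_def is_clique_def)

lemma finite_clique_complex: "finite (clique_complex n d C)"
  using clique_complex_subset_Pow by (rule finite_subset) simp

lemma clique_complex_empty: "clique_complex n d {} = {V. V \<subseteq> {1..n} \<and> card V < d}"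
proof (intro equalityI subsetI)
  fix V assume "V \<in> clique_complex n d {}"
  then have V: "V \<subseteq> {1..n}" "\<forall>S\<subseteq>V. card S \<noteq> d"
    by (auto simp: clique_complex_def is_clique_def)
  have "\<not> d \<le> card V"
  proof
    assume "d \<le> card V"
    then obtain S where "S \<subseteq> V" "card S = d" by (rule obtain_subset_with_card_n)
    with V show False by blast
  qed
  with V show "V \<in> {V. V \<subseteq> {1..n} \<and> card V < d}" by simp
next
  fix V assume V: "V \<in> {V. V \<subseteq> {1..n} \<and> card V < d}"
  then have "finite V" using finite_subset by blast
  with V have "card S < d" if "S \<subseteq> V" for S
    using card_mono[OF _ that] by fastforce
  with V show "V \<in> clique_complex n d {}"
    by (auto simp: clique_complex_def is_clique_def)
qed

locale simplicial_circuit =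
  fixes n d :: nat and C :: "nat set set" and e :: "nat set"
  assumes d_pos: "d \<ge> 1"
    and uniform: "uniform_clutter n d C"
    and simplicial: "simplicial n d C e"
begin

definition removed_faces :: "nat set set" where
  "removed_faces = (\<lambda>A. e \<union> A) ` {A. A \<subseteq> nbhd C e \<and> A \<noteq> {}}"

lemma card_e: "card e = d - 1"
  using simplicial by (simp add: simplicial_def submax_circuit_def)

lemma finite_e: "finite e"
proof -
  obtain F where "F \<in> C" "e \<subseteq> F"
    using simplicial by (auto simp: simplicial_def submax_circuit_def)
  with uniform have "e \<subseteq> {1..n}" by (auto simp: uniform_clutter_def)
  then show ?thesis by (rule finite_subset) simp
qed

lemma card_insert_e: "c \<notin> e \<Longrightarrow> card (insert c e) = d"
  using finite_e card_e d_pos by simp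

lemma nbhd_disjoint: "nbhd C e \<inter> e = {}"
proof (rule ccontr)
  assume "nbhd C e \<inter> e \<noteq> {}"
  then obtain c where "c \<in> e" "insert c e \<in> C" by (auto simp: nbhd_def)
  with uniform have "card e = d" by (auto simp: uniform_clutter_def insert_absorb)
  with card_e d_pos show False by simp
qed

lemma finite_nbhd: "finite (nbhd C e)"
proof -
  have "nbhd C e \<subseteq> {1..n}" using uniform by (auto simp: nbhd_def uniform_clutter_def)
  then show ?thesis by (rule finite_subset) simp
qed

lemma card_Un_nbhd_subset:
  assumes "A \<subseteq> nbhd C e"
  shows "card (e \<union> A) = d - 1 + card A"
proof -
  have "finite A" using assms finite_nbhd by (rule finite_subset)
  moreover have "e \<inter> A = {}" using assms nbhd_disjoint by blast
  ultimately show ?thesis using card_Un_disjoint[OF finite_e] card_e by simp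
qed

lemma closed_nbhd_in_clique_complex: "e \<union> nbhd C e \<in> clique_complex n d C"
  using simplicial by (simp add: simplicial_def closed_nbhd_def clique_complex_def)

text \<open>A clique of \<open>C\<close> that is no clique of \<open>C \ e\<close> contains a \<open>d\<close>-set through \<open>e\<close>; all its
  vertices outside \<open>e\<close> are then neighbours of \<open>e\<close>.\<close>
lemma clique_complex_eq_Un_removed_faces:
  "clique_complex n d C = clique_complex n d (delete C e) \<union> removed_faces"
proof (intro equalityI subsetI)
  fix V assume "V \<in> clique_complex n d C"
  then have V: "is_clique n d C V" by (simp add: clique_complex_def)
  show "V \<in> clique_complex n d (delete C e) \<union> removed_faces"
  proof (cases "is_clique n d (delete C e) V")
    case True
    then show ?thesis by (simp add: clique_complex_def)
  next
    case False
    with V obtain S where S: "S \<subseteq> V" "card S = d" "S \<in> C" "e \<subseteq> S"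
      by (auto simp: is_clique_def delete_def)
    have "V - e \<noteq> {}"
    proof
      assume "V - e = {}"
      then have "card S \<le> card e" using S finite_e by (intro card_mono) auto
      with S card_e d_pos show False by simp
    qed
    moreover have "V - e \<subseteq> nbhd C e"
    proof
      fix c assume c: "c \<in> V - e"
      then have "insert c e \<subseteq> V" "card (insert c e) = d" using S card_insert_e by auto
      with V show "c \<in> nbhd C e" by (auto simp: is_clique_def nbhd_def)
    qed
    moreover have "V = e \<union> (V - e)" using S by blast
    ultimately show ?thesis unfolding removed_faces_def by blast
  qed
next
  fix V assume "V \<in> clique_complex n d (delete C e) \<union> removed_faces"
  then show "V \<in> clique_complex n d C"
  proof
    assume "V \<in> clique_complex n d (delete C e)"
    then show ?thesis by (auto simp: clique_complex_def is_clique_def delete_def)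
  next
    assume "V \<in> removed_faces"
    then have "V \<subseteq> closed_nbhd C e" by (auto simp: removed_faces_def closed_nbhd_def)
    with simplicial show ?thesis
      by (auto simp: clique_complex_def simplicial_def is_clique_def)
  qed
qed

lemma clique_complex_delete_disjoint: "clique_complex n d (delete C e) \<inter> removed_faces = {}"
proof (rule ccontr)
  assume "clique_complex n d (delete C e) \<inter> removed_faces \<noteq> {}"
  then obtain A a where A: "A \<subseteq> nbhd C e" "a \<in> A" "is_clique n d (delete C e) (e \<union> A)"
    by (auto simp: removed_faces_def clique_complex_def)
  then have "insert a e \<in> C" "insert a e \<subseteq> e \<union> A" "card (insert a e) = d"
    using nbhd_disjoint card_insert_e by (auto simp: nbhd_def)
  with A have "insert a e \<in> delete C e" by (auto simp: is_clique_def)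
  then show False by (auto simp: delete_def)
qed

lemma sum_removed_faces:
  fixes g :: "nat \<Rightarrow> 'a::comm_semiring_1"
  shows "(\<Sum>V\<in>removed_faces. g (card V)) =
           (\<Sum>j=1..card (nbhd C e). of_nat (card (nbhd C e) choose j) * g (d - 1 + j))"
proof -
  have "inj_on (\<lambda>A. e \<union> A) {A. A \<subseteq> nbhd C e \<and> A \<noteq> {}}"
    using nbhd_disjoint by (auto intro!: inj_onI)
  then have "(\<Sum>V\<in>removed_faces. g (card V)) = (\<Sum>A | A \<subseteq> nbhd C e \<and> A \<noteq> {}. g (d - 1 + card A))"
    by (simp add: removed_faces_def sum.reindex card_Un_nbhd_subset)
  also have "{A. A \<subseteq> nbhd C e \<and> A \<noteq> {}} = {A. A \<subseteq> nbhd C e \<and> card A \<in> {1..card (nbhd C e)}}"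
    using finite_nbhd by (auto simp: card_mono Suc_le_eq card_gt_0_iff intro: finite_subset)
  also have "(\<Sum>A | A \<subseteq> nbhd C e \<and> card A \<in> {1..card (nbhd C e)}. g (d - 1 + card A)) =
      (\<Sum>j=1..card (nbhd C e). of_nat (card (nbhd C e) choose j) * g (d - 1 + j))"
    using finite_nbhd by (rule sum_subsets_by_card) simp
  finally show ?thesis .
qed

end

lemma sum_clique_complex_card:
  fixes g :: "nat \<Rightarrow> 'a::comm_semiring_1"
  assumes "d \<ge> 1" "uniform_clutter n d C" "simplicial_order n d C es"
  shows "(\<Sum>V\<in>clique_complex n d C. g (card V)) =
           (\<Sum>i<d. of_nat (n choose i) * g i)
           + (\<Sum>x\<leftarrow>order_multiset C es. \<Sum>j=1..x. of_nat (x choose j) * g (d - 1 + j))"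
  using assms(2,3)
proof (induction es arbitrary: C)
  case Nil
  then have "C = {}" by (simp add: simplicial_order_Nil)
  then show ?case
    using sum_subsets_by_card[of "{1..n}" "{..<d}" g]
    by (simp add: clique_complex_empty order_multiset_Nil)
next
  case (Cons e es)
  then have "simplicial n d C e" and es: "simplicial_order n d (delete C e) es"
    by (auto simp: simplicial_order_Cons)
  with assms(1) Cons.prems(1) interpret simplicial_circuit n d C e by unfold_locales
  have "finite removed_faces"
    using finite_clique_complex clique_complex_eq_Un_removed_faces
    by (metis finite_Un)
  then have "(\<Sum>V\<in>clique_complex n d C. g (card V)) =
      (\<Sum>V\<in>clique_complex n d (delete C e). g (card V)) + (\<Sum>V\<in>removed_faces. g (card V))"
    unfolding clique_complex_eq_Un_removed_faces
    by (intro sum.union_disjoint finite_clique_complex clique_complex_delete_disjoint)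
  then show ?case
    using Cons.IH[OF uniform_clutter_delete[OF Cons.prems(1)] es]
    by (simp add: sum_removed_faces order_multiset_Cons algebra_simps)
qed

lemma clique_complex_card_bound:
  assumes "d \<ge> 1" "uniform_clutter n d C" "simplicial_order n d C es"
    and "V \<in> clique_complex n d C"
  shows "card V < d \<or> (\<exists>x\<in>set (order_multiset C es). card V \<le> d - 1 + x)"
  using assms(2-4)
proof (induction es arbitrary: C)
  case Nil
  then show ?case by (simp add: simplicial_order_Nil clique_complex_empty)
next
  case (Cons e es)
  then have "simplicial n d C e" and es: "simplicial_order n d (delete C e) es"
    by (auto simp: simplicial_order_Cons)
  with assms(1) Cons.prems(1) interpret simplicial_circuit n d C e by unfold_locales
  from Cons.prems(3) consider "V \<in> clique_complex n d (delete C e)" | "V \<in> removed_faces"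
    using clique_complex_eq_Un_removed_faces by blast
  then show ?case
  proof cases
    case 1
    then show ?thesis
      using Cons.IH[OF uniform_clutter_delete[OF Cons.prems(1)] es]
      by (auto simp: order_multiset_Cons)
  next
    case 2
    then obtain A where "A \<subseteq> nbhd C e" "V = e \<union> A" by (auto simp: removed_faces_def)
    then have "card V \<le> d - 1 + card (nbhd C e)"
      using card_Un_nbhd_subset card_mono[OF finite_nbhd] by simp
    then show ?thesis by (simp add: order_multiset_Cons)
  qed
qed

lemma clique_complex_card_attained:
  assumes "d \<ge> 1" "uniform_clutter n d C" "simplicial_order n d C es"
    and "x \<in> set (order_multiset C es)"
  shows "\<exists>V\<in>clique_complex n d C. card V = d - 1 + x"
  using assms(2-4)
proof (induction es arbitrary: C)
  case Nil
  then show ?case by (simp add: order_multiset_Nil)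
next
  case (Cons e es)
  then have "simplicial n d C e" and es: "simplicial_order n d (delete C e) es"
    by (auto simp: simplicial_order_Cons)
  with assms(1) Cons.prems(1) interpret simplicial_circuit n d C e by unfold_locales
  from Cons.prems(3) consider "x = card (nbhd C e)" | "x \<in> set (order_multiset (delete C e) es)"
    by (auto simp: order_multiset_Cons)
  then show ?case
  proof cases
    case 1
    then show ?thesis
      using closed_nbhd_in_clique_complex card_Un_nbhd_subset[OF order_refl] by blast
  next
    case 2
    then show ?thesis
      using Cons.IH[OF uniform_clutter_delete[OF Cons.prems(1)] es]
        clique_complex_eq_Un_removed_faces by blast
  qed
qed

lemma sr_dim_clique_complex:
  assumes "d \<ge> 1" "uniform_clutter n d C" "simplicial_order n d C es" "es \<noteq> []"
  shows "sr_dim (clique_complex n d C) = d - 1 + Max (set (order_multiset C es))"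
  unfolding sr_dim_def
proof (rule Max_eqI)
  let ?N = "Max (set (order_multiset C es))"
  have "order_multiset C es \<noteq> []" using assms(4) by (simp add: order_multiset_def)
  then have N: "?N \<in> set (order_multiset C es)" "\<forall>x\<in>set (order_multiset C es). x \<le> ?N"
    by simp_all
  show "finite (card ` clique_complex n d C)" by (simp add: finite_clique_complex)
  show "y \<le> d - 1 + ?N" if y: "y \<in> card ` clique_complex n d C" for y
  proof -
    obtain V where V: "V \<in> clique_complex n d C" "y = card V" using y by blast
    from clique_complex_card_bound[OF assms(1-3) V(1)] consider
      "card V < d" | x where "x \<in> set (order_multiset C es)" "card V \<le> d - 1 + x"
      by blast
    then show ?thesis
    proof cases
      case (2 x)
      with N(2) show ?thesis unfolding V(2) by (meson add_left_mono order_trans)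
    qed (use V(2) in simp)
  qed
  show "d - 1 + ?N \<in> card ` clique_complex n d C"
    using clique_complex_card_attained[OF assms(1-3) N(1)] by force
qed

lemma sum_choose_times_shifted_powers:
  fixes a b :: "'a::comm_ring_1"
  assumes "a + b = 1" "x \<le> N"
  shows "(\<Sum>j=1..x. of_nat (x choose j) * (a ^ (k + j) * b ^ (N - j))) = a ^ k * (b ^ (N - x) - b ^ N)"
proof -
  have "(\<Sum>j=1..x. of_nat (x choose j) * (a ^ (k + j) * b ^ (N - j))) =
      a ^ k * b ^ (N - x) * (\<Sum>j=1..x. of_nat (x choose j) * a ^ j * b ^ (x - j))"
    unfolding sum_distrib_left
  proof (rule sum.cong[OF refl])
    fix j assume "j \<in> {1..x}"
    with assms(2) have "N - j = (N - x) + (x - j)" by simp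
    then show "of_nat (x choose j) * (a ^ (k + j) * b ^ (N - j)) =
        a ^ k * b ^ (N - x) * (of_nat (x choose j) * a ^ j * b ^ (x - j))"
      by (simp add: power_add algebra_simps)
  qed
  also have "(\<Sum>j=1..x. of_nat (x choose j) * a ^ j * b ^ (x - j)) = (a + b) ^ x - b ^ x"
    by (simp add: binomial_ring atMost_atLeast0 sum.atLeast_Suc_atMost)
  also have "a ^ k * b ^ (N - x) * ((a + b) ^ x - b ^ x) = a ^ k * (b ^ (N - x) - b ^ N)"
    using assms by (simp add: algebra_simps power_add[symmetric])
  finally show ?thesis .
qed

lemma fps_of_poly_h_polynomial:
  assumes "d \<ge> 1"
  shows "fps_of_poly
           ((\<Sum>i=0..d-1. smult (int (n choose i)) (monom 1 i * [:1, -1:] ^ (N + d - i - 1)))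
            + monom 1 (d - 1) * (\<Sum>i<length Ns. [:1, -1:] ^ (N - Ns ! i) - [:1, -1:] ^ N))
         = (\<Sum>i<d. of_nat (n choose i) * (fps_X ^ i * (1 - fps_X) ^ (N + d - 1 - i)))
           + (\<Sum>x\<leftarrow>Ns. fps_X ^ (d - 1) * ((1 - fps_X) ^ (N - x) - (1 - fps_X) ^ N))"
proof -
  have T: "fps_of_poly [:1, -1:] = (1 - fps_X :: int fps)"
    by (simp add: fps_of_poly_pCons fps_const_neg[symmetric])
  have range: "{0..d - Suc 0} = {..<d}"
    using assms by auto
  have sum_list: "(\<Sum>x\<leftarrow>Ns. f x) = (\<Sum>i<length Ns. f (Ns ! i))" for f :: "nat \<Rightarrow> int fps"
    by (simp add: sum_list_sum_nth atLeast0LessThan)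
  show ?thesis
    by (simp add: T range sum_list fps_of_poly_add fps_of_poly_sum fps_of_poly_smult
        fps_of_poly_mult fps_of_poly_monom' fps_of_poly_power fps_of_poly_diff fps_of_nat sum_distrib_left)
qed

theorem corollary2p3:
  fixes n d :: nat and C :: "nat set set" and es :: "nat set list"
  assumes "d \<ge> 1"
    and "uniform_clutter n d C"
    and "C \<noteq> {}"
    and "simplicial_order n d C es"
  shows "let Ns = order_multiset C es; N = Max (set Ns); r = length Ns;
             T = [:1, -1:] :: int poly
         in Abs_fps (h_vector n (clique_complex n d C)) =
            fps_of_poly
              ((\<Sum>i=0..d-1. smult (int (n choose i)) (monom 1 i * T ^ (N + d - i - 1)))
               + monom 1 (d - 1) * (\<Sum>i<r. T ^ (N - Ns ! i) - T ^ N))"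
proof -
  define Ns where "Ns = order_multiset C es"
  define N where "N = Max (set Ns)"
  define \<Delta> where "\<Delta> = clique_complex n d C"
  let ?g = "\<lambda>i. fps_X ^ i * (1 - fps_X) ^ (N + d - 1 - i) :: int fps"
  have "es \<noteq> []" using assms(3,4) by (auto simp: simplicial_order_Nil)
  then have dim: "sr_dim \<Delta> = N + d - 1"
    using sr_dim_clique_complex[OF assms(1,2,4)] assms(1) by (simp add: \<Delta>_def N_def Ns_def)
  have "Abs_fps (h_vector n \<Delta>) = h_series n \<Delta>"
    by (rule fps_ext) (simp add: h_vector_def)
  also have "\<dots> = (\<Sum>V\<in>\<Delta>. ?g (card V))"
    unfolding \<Delta>_def using clique_complex_subset_Pow
    by (simp add: h_series_eq_sum_faces dim[unfolded \<Delta>_def])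
  also have "\<dots> = (\<Sum>i<d. of_nat (n choose i) * ?g i)
      + (\<Sum>x\<leftarrow>Ns. \<Sum>j=1..x. of_nat (x choose j) * ?g (d - 1 + j))"
    unfolding \<Delta>_def Ns_def by (rule sum_clique_complex_card[OF assms(1,2,4)])
  also have "(\<Sum>x\<leftarrow>Ns. \<Sum>j=1..x. of_nat (x choose j) * ?g (d - 1 + j))
      = (\<Sum>x\<leftarrow>Ns. fps_X ^ (d - 1) * ((1 - fps_X) ^ (N - x) - (1 - fps_X) ^ N))"
  proof (intro arg_cong[where f = sum_list] map_cong refl)
    fix x assume "x \<in> set Ns"
    then have "x \<le> N" by (simp add: N_def)
    with assms(1) show "(\<Sum>j=1..x. of_nat (x choose j) * ?g (d - 1 + j)) =
        fps_X ^ (d - 1) * ((1 - fps_X) ^ (N - x) - (1 - fps_X) ^ N)"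
      using sum_choose_times_shifted_powers[of fps_X "1 - fps_X" x N "d - 1"] by simp
  qed
  finally show ?thesis
    using fps_of_poly_h_polynomial[OF assms(1)] by (simp add: Let_def Ns_def N_def \<Delta>_def)
qed

end
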